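(* Let $c_0,c_1\ge0$ be arbitrary. Suppose $\varepsilon_0,\varepsilon_1$ are i.i.d. with mean zero, with a density, and symmetrically distributed around zero. Then the estimator is incentive compatible: for every $(\beta_0,\beta_1)\in\mathbb{R}^2$ and all $x,r\in\{0,1\}$, $$\mathbb{E}_\varepsilon\big[\hat f(x)-f(x)\big]^2\le \mathbb{E}_\varepsilon\big[\hat f(r)-f(x)\big]^2 .$$
   Context: Setting: an agent has a binary characteristic $x\in\{0,1\}$ and ideal action $f(x)=\beta_0+\beta_1x$, with unknown parameters $\beta=(\beta_0,\beta_1)$. A statistician observes $y_x=f(x)+\varepsilon_x$ for $x=0,1$, and computes $(b_0,b_1)$ solving $\min_{b_0,b_1}\sum_{x=0,1}(y_x-b_0-b_1x)^2+c_0\mathbf{1}_{b_1\neq0}+c_1|b_1|$, breaking indifference between including ($b_1\neq0$) and excluding ($b_1=0$) in favor of inclusion. Given the agent's report $r\in\{0,1\}$ the statistician takes the action $\hat f(r)=b_0+b_1r$; the agent's payoff is $-(\hat f(r)-f(x))^2$. The estimator is incentive compatible if the displayed inequality holds for every $\beta$ and all $x,r$. *)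

theory Defs
  imports "HOL-Probability.Probability"
begin

definition pen_obj :: "real \<Rightarrow> real \<Rightarrow> real \<Rightarrow> real \<Rightarrow> real \<times> real \<Rightarrow> real" where
  "pen_obj c0 c1 y0 y1 b =
     (y0 - fst b - snd b * 0)^2 + (y1 - fst b - snd b * 1)^2
     + c0 * (if snd b \<noteq> 0 then 1 else 0) + c1 * \<bar>snd b\<bar>"

definition is_minimizer :: "real \<Rightarrow> real \<Rightarrow> real \<Rightarrow> real \<Rightarrow> real \<times> real \<Rightarrow> bool" where
  "is_minimizer c0 c1 y0 y1 b \<longleftrightarrow> (\<forall>b'. pen_obj c0 c1 y0 y1 b \<le> pen_obj c0 c1 y0 y1 b')"

text \<open>The estimate (b0,b1): a minimizer, with ties between inclusion (b1 \<noteq> 0) and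
  exclusion (b1 = 0) broken in favor of inclusion.\<close>
definition estimate :: "real \<Rightarrow> real \<Rightarrow> real \<Rightarrow> real \<Rightarrow> real \<times> real" where
  "estimate c0 c1 y0 y1 =
     (THE b. is_minimizer c0 c1 y0 y1 b \<and>
        (snd b = 0 \<longrightarrow> \<not> (\<exists>b'. is_minimizer c0 c1 y0 y1 b' \<and> snd b' \<noteq> 0)))"

definition fhat :: "real \<Rightarrow> real \<Rightarrow> real \<Rightarrow> real \<Rightarrow> real \<Rightarrow> real" where
  "fhat c0 c1 y0 y1 r = fst (estimate c0 c1 y0 y1) + snd (estimate c0 c1 y0 y1) * r"

end

theory Submission
  imports Defs
begin

text \<open>Minimizing out the intercept, the penalized problem reduces to a one-dimensional problem
  for the slope in d = y1 - y0, whose solution g(d) is a soft-then-hard threshold: an odd,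
  monotone function of d. With u = e1 - e0, the squared error of the action on report z is a
  quadratic in z with coefficients determined by e0 + e1 and g(\<beta>1 + u). The noise vectors
  (e0, e1), (e1, e0), (-e0, -e1), (-e1, -e0) have the same law, since the noise is i.i.d. and
  symmetric; averaged over these four, misreporting raises the squared error by
  2 \<beta>1 (g(\<beta>1 + u) + g(\<beta>1 - u)), which is nonnegative because g is odd and monotone.\<close>

definition profile_objective :: "real \<Rightarrow> real \<Rightarrow> real \<Rightarrow> real \<Rightarrow> real" where
  "profile_objective c0 c1 d t = (d - t)^2 / 2 + c0 * (if t \<noteq> 0 then 1 else 0) + c1 * \<bar>t\<bar>"

text \<open>Soft thresholding at c1 (from the penalty c1 |b1|) followed by hard thresholding
  (from the penalty c0 on b1 \<noteq> 0); the non-strict inequality breaks ties towards inclusion.\<close>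
definition slope_estimate :: "real \<Rightarrow> real \<Rightarrow> real \<Rightarrow> real" where
  "slope_estimate c0 c1 d = (if c1 < \<bar>d\<bar> \<and> 2 * c0 \<le> (\<bar>d\<bar> - c1)^2 then d - c1 * sgn d else 0)"

lemma pen_obj_eq_profile_objective:
  "pen_obj c0 c1 y0 y1 b =
     2 * (fst b - (y0 + y1 - snd b) / 2)^2 + profile_objective c0 c1 (y1 - y0) (snd b)"
  unfolding pen_obj_def profile_objective_def by (simp add: power2_eq_square field_simps)

lemma profile_objective_zero [simp]: "profile_objective c0 c1 d 0 = d^2 / 2"
  by (simp add: profile_objective_def)

lemma profile_objective_nonzero_ge:
  assumes "c1 \<ge> 0" "d \<noteq> 0" "t \<noteq> 0"
  shows "c0 + c1 * \<bar>d\<bar> - c1^2 / 2 + (t - (d - c1 * sgn d))^2 / 2 \<le> profile_objective c0 c1 d t"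
proof -
  have "c1 * (sgn d * t) \<le> c1 * \<bar>t\<bar>"
    using \<open>c1 \<ge> 0\<close> by (intro mult_left_mono) (auto simp: sgn_if)
  moreover have "(t - (d - c1 * sgn d))^2 = (d - t)^2 + c1^2 - 2 * c1 * \<bar>d\<bar> + 2 * c1 * (sgn d * t)"
    using \<open>d \<noteq> 0\<close> by (auto simp: sgn_if power2_eq_square algebra_simps)
  moreover have "profile_objective c0 c1 d t = (d - t)^2 / 2 + c0 + c1 * \<bar>t\<bar>"
    using \<open>t \<noteq> 0\<close> by (simp add: profile_objective_def)
  ultimately show ?thesis
    by linarith
qed

lemma profile_objective_soft_threshold:
  assumes "c1 \<ge> 0" "c1 < \<bar>d\<bar>"
  shows "profile_objective c0 c1 d (d - c1 * sgn d) = c0 + c1 * \<bar>d\<bar> - c1^2 / 2"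
  using assms unfolding profile_objective_def
  by (cases "d > 0") (auto simp: sgn_if power2_eq_square algebra_simps)

lemma profile_objective_soft_threshold_le_zero_iff:
  assumes "c1 \<ge> 0" "c1 < \<bar>d\<bar>"
  shows "profile_objective c0 c1 d (d - c1 * sgn d) \<le> profile_objective c0 c1 d 0
    \<longleftrightarrow> 2 * c0 \<le> (\<bar>d\<bar> - c1)^2"
proof -
  have "(\<bar>d\<bar> - c1)^2 = d^2 - 2 * c1 * \<bar>d\<bar> + c1^2"
    by (simp add: power2_diff)
  then show ?thesis
    using profile_objective_soft_threshold[OF assms, of c0] by (simp; linarith)
qed

lemma profile_objective_slope_estimate_less:
  assumes "c0 \<ge> 0" "c1 \<ge> 0" "t \<noteq> 0" "t \<noteq> slope_estimate c0 c1 d"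
  shows "profile_objective c0 c1 d (slope_estimate c0 c1 d) < profile_objective c0 c1 d t"
proof (cases "c1 < \<bar>d\<bar>")
  case False
  then have "slope_estimate c0 c1 d = 0"
    by (simp add: slope_estimate_def)
  have "d * t \<le> \<bar>d\<bar> * \<bar>t\<bar>"
    by (metis abs_ge_self abs_mult)
  also have "\<dots> \<le> c1 * \<bar>t\<bar>"
    using False by (intro mult_right_mono) simp_all
  finally have "d * t \<le> c1 * \<bar>t\<bar>" .
  moreover have "profile_objective c0 c1 d t = d^2 / 2 + (c1 * \<bar>t\<bar> - d * t) + t^2 / 2 + c0"
    using \<open>t \<noteq> 0\<close> by (simp add: profile_objective_def power2_diff field_simps)
  moreover have "t^2 > 0"
    using \<open>t \<noteq> 0\<close> by simp
  ultimately have "profile_objective c0 c1 d 0 < profile_objective c0 c1 d t"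
    unfolding profile_objective_zero using \<open>c0 \<ge> 0\<close> by linarith
  with \<open>slope_estimate c0 c1 d = 0\<close> show ?thesis
    by simp
next
  case True
  then have "d \<noteq> 0" using \<open>c1 \<ge> 0\<close> by auto
  note lower = profile_objective_nonzero_ge[OF \<open>c1 \<ge> 0\<close> this \<open>t \<noteq> 0\<close>, of c0]
  note soft = profile_objective_soft_threshold[OF \<open>c1 \<ge> 0\<close> True, of c0]
  show ?thesis
  proof (cases "2 * c0 \<le> (\<bar>d\<bar> - c1)^2")
    case True
    with \<open>c1 < \<bar>d\<bar>\<close> have g: "slope_estimate c0 c1 d = d - c1 * sgn d"
      by (simp add: slope_estimate_def)
    with assms(4) have "(t - (d - c1 * sgn d))^2 > 0"
      by simp
    then show ?thesis
      unfolding g using lower soft by linarith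
  next
    case False
    have "profile_objective c0 c1 d 0 < profile_objective c0 c1 d (d - c1 * sgn d)"
      using False profile_objective_soft_threshold_le_zero_iff[OF \<open>c1 \<ge> 0\<close> \<open>c1 < \<bar>d\<bar>\<close>, of c0]
      by (metis not_le)
    then have "profile_objective c0 c1 d 0 < profile_objective c0 c1 d t"
      using lower soft zero_le_power2[of "t - (d - c1 * sgn d)"] by linarith
    moreover from False have "slope_estimate c0 c1 d = 0"
      by (simp add: slope_estimate_def)
    ultimately show ?thesis
      by simp
  qed
qed

lemma profile_objective_slope_estimate_le_zero:
  assumes "c1 \<ge> 0"
  shows "profile_objective c0 c1 d (slope_estimate c0 c1 d) \<le> profile_objective c0 c1 d 0"
  using profile_objective_soft_threshold_le_zero_iff[OF assms, of d c0]
  by (simp add: slope_estimate_def)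

lemma profile_objective_slope_estimate_le:
  assumes "c0 \<ge> 0" "c1 \<ge> 0"
  shows "profile_objective c0 c1 d (slope_estimate c0 c1 d) \<le> profile_objective c0 c1 d t"
  using profile_objective_slope_estimate_less[OF assms, of t d]
    profile_objective_slope_estimate_le_zero[OF assms(2), of c0 d]
  by (cases "t = 0 \<or> t = slope_estimate c0 c1 d") auto

lemma is_minimizer_iff:
  assumes "c0 \<ge> 0" "c1 \<ge> 0"
  shows "is_minimizer c0 c1 y0 y1 b \<longleftrightarrow>
    fst b = (y0 + y1 - snd b) / 2 \<and>
    profile_objective c0 c1 (y1 - y0) (snd b)
      \<le> profile_objective c0 c1 (y1 - y0) (slope_estimate c0 c1 (y1 - y0))"
  (is "_ \<longleftrightarrow> _ \<and> ?h (snd b) \<le> ?h ?g")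
proof
  assume "is_minimizer c0 c1 y0 y1 b"
  then have "pen_obj c0 c1 y0 y1 b \<le> pen_obj c0 c1 y0 y1 ((y0 + y1 - ?g) / 2, ?g)"
    by (simp add: is_minimizer_def)
  then have le: "2 * (fst b - (y0 + y1 - snd b) / 2)^2 + ?h (snd b) \<le> ?h ?g"
    by (simp add: pen_obj_eq_profile_objective)
  moreover have "?h ?g \<le> ?h (snd b)"
    by (rule profile_objective_slope_estimate_le[OF assms])
  ultimately have "(fst b - (y0 + y1 - snd b) / 2)^2 \<le> 0"
    by linarith
  then have "fst b = (y0 + y1 - snd b) / 2"
    by simp
  with le show "fst b = (y0 + y1 - snd b) / 2 \<and> ?h (snd b) \<le> ?h ?g"
    by simp
next
  assume b: "fst b = (y0 + y1 - snd b) / 2 \<and> ?h (snd b) \<le> ?h ?g"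
  show "is_minimizer c0 c1 y0 y1 b"
    unfolding is_minimizer_def
  proof
    fix b' :: "real \<times> real"
    have "pen_obj c0 c1 y0 y1 b = ?h (snd b)"
      using b by (simp add: pen_obj_eq_profile_objective)
    also have "\<dots> \<le> ?h ?g"
      using b by simp
    also have "\<dots> \<le> ?h (snd b')"
      by (rule profile_objective_slope_estimate_le[OF assms])
    also have "\<dots> \<le> pen_obj c0 c1 y0 y1 b'"
      by (simp add: pen_obj_eq_profile_objective)
    finally show "pen_obj c0 c1 y0 y1 b \<le> pen_obj c0 c1 y0 y1 b'" .
  qed
qed

lemma estimate_eq:
  assumes "c0 \<ge> 0" "c1 \<ge> 0"
  shows "estimate c0 c1 y0 y1 =
    ((y0 + y1 - slope_estimate c0 c1 (y1 - y0)) / 2, slope_estimate c0 c1 (y1 - y0))"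
  (is "_ = ?b")
proof -
  let ?g = "slope_estimate c0 c1 (y1 - y0)"
  have nonzero_minimizer: "snd b = ?g" if "is_minimizer c0 c1 y0 y1 b" "snd b \<noteq> 0" for b
  proof -
    from \<open>is_minimizer c0 c1 y0 y1 b\<close>
    have "profile_objective c0 c1 (y1 - y0) (snd b) \<le> profile_objective c0 c1 (y1 - y0) ?g"
      by (simp add: is_minimizer_iff[OF assms])
    then show ?thesis
      using profile_objective_slope_estimate_less[OF assms \<open>snd b \<noteq> 0\<close>] by (metis not_le)
  qed
  have minimizer: "is_minimizer c0 c1 y0 y1 ?b"
    by (simp add: is_minimizer_iff[OF assms])
  show ?thesis
    unfolding estimate_def
  proof (rule the_equality)
    show "is_minimizer c0 c1 y0 y1 ?b \<and>
      (snd ?b = 0 \<longrightarrow> \<not> (\<exists>b'. is_minimizer c0 c1 y0 y1 b' \<and> snd b' \<noteq> 0))"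
    proof (intro conjI impI notI minimizer)
      assume "snd ?b = 0" "\<exists>b'. is_minimizer c0 c1 y0 y1 b' \<and> snd b' \<noteq> 0"
      then show False
        using nonzero_minimizer by (metis snd_conv)
    qed
  next
    fix b
    assume b: "is_minimizer c0 c1 y0 y1 b \<and>
      (snd b = 0 \<longrightarrow> \<not> (\<exists>b'. is_minimizer c0 c1 y0 y1 b' \<and> snd b' \<noteq> 0))"
    have "snd b = ?g"
    proof (cases "snd b = 0")
      case True
      with b minimizer show ?thesis
        by (metis snd_conv)
    next
      case False
      with b nonzero_minimizer show ?thesis
        by blast
    qed
    with b show "b = ?b"
      by (simp add: is_minimizer_iff[OF assms] prod_eq_iff)
  qed
qed

lemma fhat_eq:
  assumes "c0 \<ge> 0" "c1 \<ge> 0"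
  shows "fhat c0 c1 y0 y1 r =
    (y0 + y1 - slope_estimate c0 c1 (y1 - y0)) / 2 + slope_estimate c0 c1 (y1 - y0) * r"
  by (simp add: fhat_def estimate_eq[OF assms])

lemma slope_estimate_minus: "slope_estimate c0 c1 (- d) = - slope_estimate c0 c1 d"
  by (simp add: slope_estimate_def sgn_minus)

lemma mono_slope_estimate:
  assumes "c1 \<ge> 0"
  shows "mono (slope_estimate c0 c1)"
proof
  fix a b :: real
  assume "a \<le> b"
  have included_mono: "c1 < \<bar>v\<bar> \<and> 2 * c0 \<le> (\<bar>v\<bar> - c1)^2"
    if "c1 < \<bar>u\<bar> \<and> 2 * c0 \<le> (\<bar>u\<bar> - c1)^2" "\<bar>u\<bar> \<le> \<bar>v\<bar>" for u v
  proof -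
    have "(\<bar>u\<bar> - c1)^2 \<le> (\<bar>v\<bar> - c1)^2"
      using that by (intro power_mono) auto
    with that show ?thesis by linarith
  qed
  consider "0 \<le> a" | "b \<le> 0" | "a < 0" "0 < b"
    by linarith
  then show "slope_estimate c0 c1 a \<le> slope_estimate c0 c1 b"
  proof cases
    case 1
    then show ?thesis
      using included_mono[of a b] \<open>a \<le> b\<close> assms by (auto simp: slope_estimate_def sgn_if)
  next
    case 2
    then show ?thesis
      using included_mono[of b a] \<open>a \<le> b\<close> assms by (auto simp: slope_estimate_def sgn_if)
  next
    case 3
    then show ?thesis
      using assms by (auto simp: slope_estimate_def sgn_if)
  qed
qed

lemma slope_estimate_reflected_sum:
  assumes "c1 \<ge> 0"
  shows "0 \<le> \<beta> * (slope_estimate c0 c1 (\<beta> + u) + slope_estimate c0 c1 (\<beta> - u))"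
proof -
  have "slope_estimate c0 c1 (\<beta> - u) = - slope_estimate c0 c1 (u - \<beta>)"
    using slope_estimate_minus[of c0 c1 "u - \<beta>"] by simp
  moreover note monoD[OF mono_slope_estimate[OF assms], of "u - \<beta>" "\<beta> + u" c0]
    monoD[OF mono_slope_estimate[OF assms], of "\<beta> + u" "u - \<beta>" c0]
  ultimately show ?thesis
    by (cases "\<beta> \<ge> 0") (auto intro: mult_nonneg_nonneg mult_nonpos_nonpos)
qed

lemma borel_measurable_slope_estimate [measurable]:
  "slope_estimate c0 c1 \<in> borel_measurable borel"
  unfolding slope_estimate_def by measurable

definition prediction_loss ::
    "real \<Rightarrow> real \<Rightarrow> real \<Rightarrow> real \<Rightarrow> real \<Rightarrow> real \<times> real \<Rightarrow> real" where
  "prediction_loss c0 c1 \<beta> z x e =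
     (let g = slope_estimate c0 c1 (\<beta> + snd e - fst e)
      in ((fst e + snd e + \<beta> - g) / 2 + g * z - \<beta> * x)^2)"

lemma prediction_loss_eq:
  assumes "c0 \<ge> 0" "c1 \<ge> 0"
  shows "(fhat c0 c1 (\<beta>0 + \<beta>1 * 0 + fst e) (\<beta>0 + \<beta>1 * 1 + snd e) z - (\<beta>0 + \<beta>1 * x))^2
    = prediction_loss c0 c1 \<beta>1 z x e"
proof -
  have "(\<beta>0 + \<beta>1 * 1 + snd e) - (\<beta>0 + \<beta>1 * 0 + fst e) = \<beta>1 + snd e - fst e"
    by simp
  then show ?thesis
    unfolding fhat_eq[OF assms] prediction_loss_def Let_def by (simp add: field_simps)
qed

lemma borel_measurable_prediction_loss [measurable]:
  "prediction_loss c0 c1 \<beta> z x \<in> borel_measurable (borel \<Otimes>\<^sub>M borel)"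
  unfolding prediction_loss_def Let_def by measurable

lemma prediction_loss_symmetrized_le:
  assumes "c1 \<ge> 0" "x \<in> {0, 1}" "r \<in> {0, 1}"
  shows "prediction_loss c0 c1 \<beta> x x e + prediction_loss c0 c1 \<beta> x x (prod.swap e)
      + (prediction_loss c0 c1 \<beta> x x (- e) + prediction_loss c0 c1 \<beta> x x (prod.swap (- e)))
    \<le> prediction_loss c0 c1 \<beta> r x e + prediction_loss c0 c1 \<beta> r x (prod.swap e)
      + (prediction_loss c0 c1 \<beta> r x (- e) + prediction_loss c0 c1 \<beta> r x (prod.swap (- e)))"
proof -
  obtain e0 e1 where e: "e = (e0, e1)"
    by fastforce
  define s where "s = e0 + e1"
  define a where "a = slope_estimate c0 c1 (\<beta> + e1 - e0)"
  define b where "b = slope_estimate c0 c1 (\<beta> + e0 - e1)"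
  have "\<beta> + - e1 - - e0 = \<beta> + e0 - e1" "\<beta> + - e0 - - e1 = \<beta> + e1 - e0"
    by simp_all
  then have loss: "prediction_loss c0 c1 \<beta> z x e + prediction_loss c0 c1 \<beta> z x (prod.swap e)
      + (prediction_loss c0 c1 \<beta> z x (- e) + prediction_loss c0 c1 \<beta> z x (prod.swap (- e)))
    = ((s + \<beta> - a) / 2 + a * z - \<beta> * x)^2 + ((s + \<beta> - b) / 2 + b * z - \<beta> * x)^2
      + (((- s + \<beta> - b) / 2 + b * z - \<beta> * x)^2 + ((- s + \<beta> - a) / 2 + a * z - \<beta> * x)^2)"
    for z
    unfolding e prediction_loss_def Let_def s_def a_def b_def by (simp add: algebra_simps)
  have "0 \<le> \<beta> * (a + b)"
    using slope_estimate_reflected_sum[OF assms(1), of \<beta> c0 "e1 - e0"]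
    by (simp add: a_def b_def algebra_simps)
  \<comment> \<open>for x \<noteq> r the right-hand side exceeds the left-hand side by exactly 2 \<beta> (a + b)\<close>
  moreover have "x = r \<or> x = 0 \<and> r = 1 \<or> x = 1 \<and> r = 0"
    using assms(2,3) by auto
  ultimately show ?thesis
    unfolding loss by (auto simp: power2_eq_square field_simps)
qed

lemma prediction_loss_nonneg: "0 \<le> prediction_loss c0 c1 \<beta> z x e"
  by (simp add: prediction_loss_def Let_def)

lemma nn_integral_add_measure_preserving:
  assumes T: "T \<in> M \<rightarrow>\<^sub>M M" "distr M M T = M" and f: "f \<in> borel_measurable M"
  shows "(\<integral>\<^sup>+ x. f x + f (T x) \<partial>M) = 2 * integral\<^sup>N M f"
proof -
  have "(\<integral>\<^sup>+ x. f (T x) \<partial>M) = integral\<^sup>N (distr M M T) f"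
    by (rule nn_integral_distr[symmetric]) (simp_all add: T f)
  then have "(\<integral>\<^sup>+ x. f (T x) \<partial>M) = integral\<^sup>N M f"
    by (simp add: T)
  moreover have "(\<lambda>x. f (T x)) \<in> borel_measurable M"
    using measurable_compose[OF T(1) f] .
  ultimately show ?thesis
    using f by (simp add: nn_integral_add mult_2)
qed

lemma swap_eq_case_prod: "prod.swap = (\<lambda>(x, y). (y, x))"
  by (simp add: fun_eq_iff)

lemma distr_pair_measure_swap:
  assumes "sigma_finite_measure M"
  shows "distr (M \<Otimes>\<^sub>M M) (M \<Otimes>\<^sub>M M) prod.swap = M \<Otimes>\<^sub>M M"
proof -
  interpret pair_sigma_finite M M
    using assms by (simp add: pair_sigma_finite.intro)
  show ?thesis
    unfolding swap_eq_case_prod by (rule distr_pair_swap[symmetric])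
qed

lemma distr_pair_measure_map_prod:
  assumes "sigma_finite_measure N" "f \<in> M \<rightarrow>\<^sub>M M" "g \<in> N \<rightarrow>\<^sub>M N"
    and "distr M M f = M" "distr N N g = N"
  shows "distr (M \<Otimes>\<^sub>M N) (M \<Otimes>\<^sub>M N) (map_prod f g) = M \<Otimes>\<^sub>M N"
  using pair_measure_distr[OF assms(2,3)] assms(1,4,5) by (simp add: map_prod_def)

lemma uminus_prod_eq_map_prod: "uminus = map_prod uminus uminus"
  by (simp add: fun_eq_iff)

lemma distr_pair_measure_uminus:
  fixes D :: "real measure"
  assumes "sigma_finite_measure D" "sets D = sets borel" "distr D borel uminus = D"
  shows "distr (D \<Otimes>\<^sub>M D) (D \<Otimes>\<^sub>M D) uminus = D \<Otimes>\<^sub>M D"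
proof -
  have "distr D D uminus = D"
    using assms(2,3) by (metis distr_cong)
  moreover have "uminus \<in> D \<rightarrow>\<^sub>M D"
    unfolding measurable_cong_sets[OF assms(2) assms(2)] by measurable
  ultimately show ?thesis
    unfolding uminus_prod_eq_map_prod using distr_pair_measure_map_prod assms(1) by blast
qed

lemma nn_integral_pair_symmetrize:
  fixes D :: "real measure"
  assumes "sigma_finite_measure D" "sets D = sets borel" "distr D borel uminus = D"
    and f: "f \<in> borel_measurable (borel \<Otimes>\<^sub>M borel)"
  shows "(\<integral>\<^sup>+ e. f e + f (prod.swap e) + (f (- e) + f (prod.swap (- e))) \<partial>(D \<Otimes>\<^sub>M D))
    = 4 * integral\<^sup>N (D \<Otimes>\<^sub>M D) f"
proof -
  let ?M = "D \<Otimes>\<^sub>M D"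
  have sets_M: "sets ?M = sets (borel \<Otimes>\<^sub>M borel)"
    using \<open>sets D = sets borel\<close> by (intro sets_pair_measure_cong)
  have measurable_M: "measurable ?M = measurable (borel \<Otimes>\<^sub>M borel)"
    by (rule ext measurable_cong_sets[OF sets_M refl])+
  have swap_measurable: "prod.swap \<in> ?M \<rightarrow>\<^sub>M ?M"
    unfolding swap_eq_case_prod by (rule measurable_pair_swap')
  have uminus_measurable: "uminus \<in> ?M \<rightarrow>\<^sub>M ?M"
    unfolding measurable_cong_sets[OF sets_M sets_M] uminus_prod_eq_map_prod map_prod_def
    by measurable
  have uminus_preserving: "distr ?M ?M uminus = ?M"
    by (rule distr_pair_measure_uminus[OF assms(1-3)])
  let ?S = "\<lambda>e. f e + f (prod.swap e)"
  have f_M: "f \<in> borel_measurable ?M"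
    using f by (simp add: measurable_M)
  then have "?S \<in> borel_measurable ?M"
    by (intro borel_measurable_add measurable_compose[OF swap_measurable])
  then have "(\<integral>\<^sup>+ e. ?S e + ?S (- e) \<partial>?M) = 2 * integral\<^sup>N ?M ?S"
    by (rule nn_integral_add_measure_preserving[OF uminus_measurable uminus_preserving])
  also have "integral\<^sup>N ?M ?S = 2 * integral\<^sup>N ?M f"
    using swap_measurable distr_pair_measure_swap[OF assms(1)] f_M
    by (rule nn_integral_add_measure_preserving)
  finally show ?thesis
    by (simp add: mult.assoc[symmetric])
qed

theorem proposition2:
  fixes c0 c1 :: real and D :: "real measure" and \<beta>0 \<beta>1 x r :: real
  assumes "c0 \<ge> 0" and "c1 \<ge> 0"
    and "prob_space D" and "sets D = sets borel"
    and "integrable D (\<lambda>e. e)" and "(\<integral>e. e \<partial>D) = 0"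
    and "absolutely_continuous lborel D"
    and "distr D borel uminus = D"
    and "x \<in> {0, 1}" and "r \<in> {0, 1}"
  shows "(\<integral>\<^sup>+ e. ennreal ((fhat c0 c1 (\<beta>0 + \<beta>1 * 0 + fst e) (\<beta>0 + \<beta>1 * 1 + snd e) x
                              - (\<beta>0 + \<beta>1 * x))^2) \<partial>(D \<Otimes>\<^sub>M D))
       \<le> (\<integral>\<^sup>+ e. ennreal ((fhat c0 c1 (\<beta>0 + \<beta>1 * 0 + fst e) (\<beta>0 + \<beta>1 * 1 + snd e) r
                              - (\<beta>0 + \<beta>1 * x))^2) \<partial>(D \<Otimes>\<^sub>M D))"
proof -
  let ?L = "\<lambda>z e. ennreal (prediction_loss c0 c1 \<beta>1 z x e)"
  let ?S = "\<lambda>z e. ?L z e + ?L z (prod.swap e) + (?L z (- e) + ?L z (prod.swap (- e)))"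
  have symmetrize: "integral\<^sup>N (D \<Otimes>\<^sub>M D) (?S z) = 4 * integral\<^sup>N (D \<Otimes>\<^sub>M D) (?L z)" for z
    using prob_space_imp_sigma_finite[OF \<open>prob_space D\<close>] \<open>sets D = sets borel\<close>
      \<open>distr D borel uminus = D\<close>
    by (rule nn_integral_pair_symmetrize) measurable
  have "integral\<^sup>N (D \<Otimes>\<^sub>M D) (?S x) \<le> integral\<^sup>N (D \<Otimes>\<^sub>M D) (?S r)"
  proof (rule nn_integral_mono)
    fix e :: "real \<times> real"
    show "?S x e \<le> ?S r e"
      using prediction_loss_symmetrized_le[OF \<open>c1 \<ge> 0\<close> \<open>x \<in> {0, 1}\<close> \<open>r \<in> {0, 1}\<close>, of c0 \<beta>1 e]
      by (simp add: prediction_loss_nonneg ennreal_plus[symmetric] del: ennreal_plus)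
  qed
  then have "integral\<^sup>N (D \<Otimes>\<^sub>M D) (?L x) \<le> integral\<^sup>N (D \<Otimes>\<^sub>M D) (?L r)"
    unfolding symmetrize by (simp add: ennreal_mult_le_mult_iff)
  then show ?thesis
    unfolding prediction_loss_eq[OF \<open>c0 \<ge> 0\<close> \<open>c1 \<ge> 0\<close>] .
qed

end
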